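(* Let $d_1\le\dots\le d_n$ be a \textsc{2-Visits} instance with discretized sequence $\langle a_1,\dots,a_n\rangle$. For every $i\in[n]$, in any feasible schedule at most $n-i$ primary visits occur at positions strictly greater than $a_i$.
   Context: \textsc{2-Visits} (primary/secondary formulation): given non-decreasing positive integers $d_1\le\dots\le d_n$, a feasible schedule is a schedule of length $2n$ (each position $1,\dots,2n$ holds one visit) containing one primary and one secondary visit of each node $i\in[n]$, such that the primary visit of $i$ is at position at most $d_i$, and the secondary visit of $i$ is either before its primary visit or at most $d_i$ positions after its primary visit. The discretized sequence is defined by $a_n=d_n$ and $a_i=\min\{a_{i+1}-1,d_i\}$ for $i<n$. *)

theory Defs
  imports Main
begin

datatype visit_kind = Primary | Secondary

text \<open>A schedule of length 2n maps each position 1..2n to a visit (node, kind);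
  it contains exactly one primary and one secondary visit of each node in [n].\<close>
definition is_schedule :: "nat \<Rightarrow> (nat \<Rightarrow> nat \<times> visit_kind) \<Rightarrow> bool" where
  "is_schedule n \<sigma> \<longleftrightarrow> bij_betw \<sigma> {1..2*n} ({1..n} \<times> UNIV)"

definition vpos :: "nat \<Rightarrow> (nat \<Rightarrow> nat \<times> visit_kind) \<Rightarrow> nat \<times> visit_kind \<Rightarrow> nat" where
  "vpos n \<sigma> v = (THE t. t \<in> {1..2*n} \<and> \<sigma> t = v)"

definition feasible :: "nat \<Rightarrow> (nat \<Rightarrow> nat) \<Rightarrow> (nat \<Rightarrow> nat \<times> visit_kind) \<Rightarrow> bool" where
  "feasible n d \<sigma> \<longleftrightarrow> is_schedule n \<sigma> \<and>
     (\<forall>i\<in>{1..n}.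
        vpos n \<sigma> (i, Primary) \<le> d i \<and>
        (vpos n \<sigma> (i, Secondary) < vpos n \<sigma> (i, Primary) \<or>
         vpos n \<sigma> (i, Secondary) \<le> vpos n \<sigma> (i, Primary) + d i))"

function disc :: "(nat \<Rightarrow> nat) \<Rightarrow> nat \<Rightarrow> nat \<Rightarrow> int" where
  "disc d n i = (if n \<le> i then int (d n) else min (disc d n (Suc i) - 1) (int (d i)))"
  by auto
termination by (relation "measure (\<lambda>(d, n, i). n - i)") auto

end

theory Submission
  imports Defs
begin

text \<open>Unfolding the recursion, a_i is the minimum of d_k - (k - i) over i <= k <= n; fix a
  minimising k. The nodes j <= k have their primary visits at distinct positions at most
  d_j <= d_k, so at most d_k - a_i = k - i of them lie after a_i, and the nodes k < j <= n
  contribute at most n - k. Neither the positivity of d nor the secondary visits play a role.\<close>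

declare disc.simps[simp del]

lemma disc_attained:
  assumes "i \<le> n"
  shows "\<exists>k. i \<le> k \<and> k \<le> n \<and> disc d n i = int (d k) - int (k - i)"
  using assms
proof (induction "n - i" arbitrary: i)
  case 0
  then show ?case by (intro exI[of _ n]) (subst disc.simps, simp)
next
  case (Suc m)
  then have "i < n" by simp
  then have disc_i: "disc d n i = min (disc d n (Suc i) - 1) (int (d i))"
    by (simp add: disc.simps[of d n i])
  from Suc obtain k where k: "Suc i \<le> k" "k \<le> n" "disc d n (Suc i) = int (d k) - int (k - Suc i)"
    by (metis Suc_diff_Suc diff_Suc_1 Suc_leI \<open>i < n\<close>)
  show ?case
  proof (cases "disc d n (Suc i) - 1 \<le> int (d i)")
    case True
    then show ?thesis using k disc_i by (intro exI[of _ k]) auto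
  next
    case False
    then show ?thesis using disc_i \<open>i < n\<close> by (intro exI[of _ i]) auto
  qed
qed

lemma vpos_eq_inv_into:
  assumes "is_schedule n \<sigma>" "v \<in> {1..n} \<times> UNIV"
  shows "vpos n \<sigma> v = inv_into {1..2*n} \<sigma> v"
proof -
  have bij: "bij_betw \<sigma> {1..2*n} ({1..n} \<times> UNIV)"
    using assms(1) by (simp add: is_schedule_def)
  then have v: "v \<in> \<sigma> ` {1..2*n}"
    using assms(2) by (simp add: bij_betw_def)
  show ?thesis
    unfolding vpos_def
  proof (rule the_equality)
    show "inv_into {1..2*n} \<sigma> v \<in> {1..2*n} \<and> \<sigma> (inv_into {1..2*n} \<sigma> v) = v"
      using inv_into_into[OF v] f_inv_into_f[OF v] by blast
    show "t = inv_into {1..2*n} \<sigma> v" if "t \<in> {1..2*n} \<and> \<sigma> t = v" for t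
      using that bij by (metis bij_betw_imp_inj_on inv_into_f_f)
  qed
qed

lemma inj_on_vpos:
  assumes "is_schedule n \<sigma>"
  shows "inj_on (vpos n \<sigma>) ({1..n} \<times> UNIV)"
proof -
  have "inj_on (inv_into {1..2*n} \<sigma>) ({1..n} \<times> UNIV)"
    using assms by (intro inj_on_inv_into) (simp add: is_schedule_def bij_betw_def)
  then show ?thesis
    using vpos_eq_inv_into[OF assms] inj_on_cong by blast
qed

lemma card_nat_between_le: "card {t::nat. a < int t \<and> t \<le> b} \<le> nat (int b - a)"
proof -
  have "{t::nat. a < int t \<and> t \<le> b} \<subseteq> {nat (a + 1)..b}" by auto
  then have "card {t::nat. a < int t \<and> t \<le> b} \<le> Suc b - nat (a + 1)"
    using card_mono[of "{nat (a + 1)..b}"] by fastforce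
  then show ?thesis by linarith
qed

lemma card_late_primaries_le:
  assumes "is_schedule n \<sigma>" "k \<le> n" "\<forall>j\<in>{1..k}. vpos n \<sigma> (j, Primary) \<le> D"
  shows "card {j \<in> {1..k}. a < int (vpos n \<sigma> (j, Primary))} \<le> nat (int D - a)"
proof -
  let ?late = "{j \<in> {1..k}. a < int (vpos n \<sigma> (j, Primary))}"
  let ?p = "\<lambda>j. vpos n \<sigma> (j, Primary)"
  have "inj_on (\<lambda>j. (j, Primary)) ?late" "(\<lambda>j. (j, Primary)) ` ?late \<subseteq> {1..n} \<times> UNIV"
    using assms(2) by (auto intro: inj_onI)
  then have "inj_on ?p ?late"
    using comp_inj_on inj_on_subset[OF inj_on_vpos[OF assms(1)]] unfolding comp_def by blast
  then have "card ?late = card (?p ` ?late)" by (simp add: card_image)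
  also have "\<dots> \<le> card {t. a < int t \<and> t \<le> D}"
    using assms(3) by (intro card_mono) (auto simp: finite_nat_set_iff_bounded_le)
  also have "\<dots> \<le> nat (int D - a)" by (rule card_nat_between_le)
  finally show ?thesis .
qed

theorem lemma3:
  fixes n :: nat and d :: "nat \<Rightarrow> nat" and \<sigma> :: "nat \<Rightarrow> nat \<times> visit_kind" and i :: nat
  assumes pos: "\<forall>j\<in>{1..n}. d j > 0"
    and sorted: "\<forall>j k. 1 \<le> j \<and> j \<le> k \<and> k \<le> n \<longrightarrow> d j \<le> d k"
    and feas: "feasible n d \<sigma>"
    and i: "i \<in> {1..n}"
  shows "card {j \<in> {1..n}. int (vpos n \<sigma> (j, Primary)) > disc d n i} \<le> n - i"
proof -
  let ?late = "\<lambda>m. {j \<in> {1..m}. disc d n i < int (vpos n \<sigma> (j, Primary))}"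
  obtain k where k: "i \<le> k" "k \<le> n" "disc d n i = int (d k) - int (k - i)"
    using disc_attained[of i n d] i by auto
  have deadline: "\<forall>j\<in>{1..k}. vpos n \<sigma> (j, Primary) \<le> d k"
    using feas sorted k(2) unfolding feasible_def by (meson atLeastAtMost_iff le_trans order.trans)
  have "card (?late n) \<le> card (?late k \<union> {k<..n})"
    by (intro card_mono) auto
  also have "\<dots> \<le> card (?late k) + card {k<..n}" by (rule card_Un_le)
  also have "\<dots> \<le> (k - i) + (n - k)"
    using card_late_primaries_le[OF _ k(2) deadline, of "disc d n i"] feas k(3)
    by (simp add: feasible_def)
  finally show ?thesis using k by simp
qed

end
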